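(* Let $(\tilde{\mathscr M},\tilde g_{ab})$ be the unphysical (conformally completed) spacetime of an asymptotically flat spacetime, with conformal factor $\Omega$, and let $\mathscr I^+$ be future null infinity, a null hypersurface with null normal $\tilde n_a=\tilde\nabla_a\Omega|_{\mathscr I^+}$, on which the expansion $\theta=\tilde m^a\bar{\tilde m}^b\tilde\nabla_a\tilde n_b$ and shear $\sigma=\tilde m^a\tilde m^b\tilde\nabla_a\tilde n_b$ vanish. Let $e^a_I$ ($I=0,1,2,3$) be an orthonormal tetrad of $\tilde g_{ab}$ satisfying the gauge fixing that $e_1^a$ is normal to the spacelike cross-sections of $\mathscr I^+$ while $e_2^a,e_3^a$ are tangent to them, with Newman–Penrose frame $\tilde n^a=\tfrac12(e_0^a+e_1^a)$, $\tilde l^a=\tfrac12(e_0^a-e_1^a)$, $\tilde m^a=\tfrac12(e_2^a+ie_3^a)$ on $\mathscr I^+$. Let $\omega_a^{\ IJ}=e^{Ib}\tilde\nabla_a e_b^{\ J}$. Then the pullbacks of these connection one-forms to $\mathscr I^+$ satisfy $$\underset{\Leftarrow}{\omega}^{21}=\underset{\Leftarrow}{\omega}^{20},\qquad \underset{\Leftarrow}{\omega}^{31}=\underset{\Leftarrow}{\omega}^{30}.$$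
   Context: $\tilde\nabla$ is the Levi-Civita connection of $\tilde g_{ab}=\Omega^2 g_{ab}$, where $g_{ab}$ is the physical metric; $\Omega$ vanishes on $\mathscr I^+$ with nonvanishing gradient there. Internal indices are raised and lowered with $\eta_{IJ}=\mathrm{diag}(-1,1,1,1)$, and $\tilde g_{ab}=e_a^{\ I}e_b^{\ J}\eta_{IJ}$ with $e_a^{\ I}$ the co-tetrad inverse to $e^a_I$. The symbol $\underset{\Leftarrow}{\cdot}$ denotes pullback to $\mathscr I^+$. *)

theory Defs
  imports "HOL-Analysis.Analysis"
begin

text \<open>Local coordinate model of the unphysical spacetime near future null infinity:
  points are coordinates in an open set U of real^4; abstract (spacetime) indices
  a,b,c,d and internal (tetrad) indices I,J range over the finite type 4
  with elements 0,1,2,3.\<close>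

type_synonym pt = "real^4"

definition pd :: "4 \<Rightarrow> (pt \<Rightarrow> real) \<Rightarrow> pt \<Rightarrow> real" where
  "pd a f x = frechet_derivative f (at x) (axis a 1)"

definition smooth_on :: "pt set \<Rightarrow> (pt \<Rightarrow> real) \<Rightarrow> bool" where
  "smooth_on U f \<longleftrightarrow> (\<forall>ds::4 list. \<forall>x\<in>U. (fold pd ds f) differentiable (at x))"

definition eta :: "4 \<Rightarrow> 4 \<Rightarrow> real" where
  "eta I J = (if I = J then (if I = 0 then -1 else 1) else 0)"

text \<open>Inverse metric components g^{ab}, for a metric G x $ a $ b = g_{ab}(x).\<close>
definition ginv :: "(pt \<Rightarrow> real^4^4) \<Rightarrow> pt \<Rightarrow> 4 \<Rightarrow> 4 \<Rightarrow> real" where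
  "ginv G x a b = matrix_inv (G x) $ a $ b"

definition christoffel :: "(pt \<Rightarrow> real^4^4) \<Rightarrow> pt \<Rightarrow> 4 \<Rightarrow> 4 \<Rightarrow> 4 \<Rightarrow> real" where
  "christoffel G x c a b = (1/2) * (\<Sum>d\<in>UNIV. ginv G x c d *
      (pd a (\<lambda>y. G y $ d $ b) x + pd b (\<lambda>y. G y $ d $ a) x - pd d (\<lambda>y. G y $ a $ b) x))"

definition cov_deriv :: "(pt \<Rightarrow> real^4^4) \<Rightarrow> (pt \<Rightarrow> 4 \<Rightarrow> real) \<Rightarrow> pt \<Rightarrow> 4 \<Rightarrow> 4 \<Rightarrow> real" where
  "cov_deriv G w x a b = pd a (\<lambda>y. w y b) x - (\<Sum>c\<in>UNIV. christoffel G x c a b * w x c)"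

text \<open>Tetrad: e I x $ a = e^a_I(x).  Co-tetrad e_a^I as the inverse matrix:
  cotetrad e x I a = e_a^I(x).\<close>
definition tetrad_matrix :: "(4 \<Rightarrow> pt \<Rightarrow> real^4) \<Rightarrow> pt \<Rightarrow> real^4^4" where
  "tetrad_matrix e x = (\<chi> a I. e I x $ a)"

definition cotetrad :: "(4 \<Rightarrow> pt \<Rightarrow> real^4) \<Rightarrow> pt \<Rightarrow> 4 \<Rightarrow> 4 \<Rightarrow> real" where
  "cotetrad e x I a = matrix_inv (tetrad_matrix e x) $ I $ a"

definition orthonormal_tetrad :: "(pt \<Rightarrow> real^4^4) \<Rightarrow> (4 \<Rightarrow> pt \<Rightarrow> real^4) \<Rightarrow> pt \<Rightarrow> bool" where
  "orthonormal_tetrad G e x \<longleftrightarrow>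
     (\<forall>I J. (\<Sum>a\<in>UNIV. \<Sum>b\<in>UNIV. G x $ a $ b * e I x $ a * e J x $ b) = eta I J)"

text \<open>Connection one-forms omega_a^{IJ} = e^{Ib} nabla_a e_b^J, with
  e^{Ib} = eta^{IK} e^b_K (eta is its own inverse).\<close>
definition conn_form :: "(pt \<Rightarrow> real^4^4) \<Rightarrow> (4 \<Rightarrow> pt \<Rightarrow> real^4) \<Rightarrow> pt \<Rightarrow> 4 \<Rightarrow> 4 \<Rightarrow> 4 \<Rightarrow> real" where
  "conn_form G e x a I J = (\<Sum>b\<in>UNIV. (\<Sum>K\<in>UNIV. eta I K * e K x $ b) *
      cov_deriv G (\<lambda>y c. cotetrad e y J c) x a b)"

definition grad :: "(pt \<Rightarrow> real) \<Rightarrow> pt \<Rightarrow> 4 \<Rightarrow> real" where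
  "grad f x a = pd a f x"

definition nvec :: "(pt \<Rightarrow> real^4^4) \<Rightarrow> (pt \<Rightarrow> real) \<Rightarrow> pt \<Rightarrow> 4 \<Rightarrow> real" where
  "nvec G \<Omega> x a = (\<Sum>b\<in>UNIV. ginv G x a b * pd b \<Omega> x)"

definition mvec :: "(4 \<Rightarrow> pt \<Rightarrow> real^4) \<Rightarrow> pt \<Rightarrow> 4 \<Rightarrow> complex" where
  "mvec e x a = (complex_of_real (e 2 x $ a) + \<i> * complex_of_real (e 3 x $ a)) / 2"

definition expansion :: "(pt \<Rightarrow> real^4^4) \<Rightarrow> (4 \<Rightarrow> pt \<Rightarrow> real^4) \<Rightarrow> (pt \<Rightarrow> real) \<Rightarrow> pt \<Rightarrow> complex" where
  "expansion G e \<Omega> x = (\<Sum>a\<in>UNIV. \<Sum>b\<in>UNIV. mvec e x a * cnj (mvec e x b) *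
       complex_of_real (cov_deriv G (grad \<Omega>) x a b))"

definition shear :: "(pt \<Rightarrow> real^4^4) \<Rightarrow> (4 \<Rightarrow> pt \<Rightarrow> real^4) \<Rightarrow> (pt \<Rightarrow> real) \<Rightarrow> pt \<Rightarrow> complex" where
  "shear G e \<Omega> x = (\<Sum>a\<in>UNIV. \<Sum>b\<in>UNIV. mvec e x a * mvec e x b *
       complex_of_real (cov_deriv G (grad \<Omega>) x a b))"

definition tangent_scri :: "(pt \<Rightarrow> real) \<Rightarrow> pt \<Rightarrow> real^4 \<Rightarrow> bool" where
  "tangent_scri \<Omega> x X \<longleftrightarrow> (\<Sum>a\<in>UNIV. X $ a * pd a \<Omega> x) = 0"

text \<open>Pullback of a one-form w_a to scri at x, evaluated on a tangent vector X.\<close>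
definition pullback_eq :: "(pt \<Rightarrow> real) \<Rightarrow> pt \<Rightarrow> (4 \<Rightarrow> real) \<Rightarrow> (4 \<Rightarrow> real) \<Rightarrow> bool" where
  "pullback_eq \<Omega> x w1 w2 \<longleftrightarrow>
     (\<forall>X. tangent_scri \<Omega> x X \<longrightarrow> (\<Sum>a\<in>UNIV. X $ a * w1 a) = (\<Sum>a\<in>UNIV. X $ a * w2 a))"

end

(* Since the co-tetrad rows e^0 and e^1 are the lowered vectors -e_0 and e_1, the difference
   omega_a^{I1} - omega_a^{I0} equals 2 e_I^b nabla_a n_b, where n = (e_0 + e_1)/2 extends the null
   normal off scri and is null everywhere. On scri n_b agrees with nabla_b Omega, so along scri
   nabla_a n_b differs from the Hessian H_ab = nabla_a nabla_b Omega only by the derivative of a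
   function vanishing on scri, which is zero in tangent directions. A tangent vector is a
   combination of n, e_2 and e_3. H vanishes on pairs from e_2, e_3 because expansion and shear
   vanish, and H(n, e_I) = e_I^b n^a nabla_b n_a = (1/2) e_I(n.n) = 0 because H is symmetric and
   n is null. *)

theory Submission
  imports Defs
begin

section \<open>Index sums and coordinate partial derivatives\<close>

lemma sum_UNIV_4: "(\<Sum>i\<in>(UNIV::4 set). f i) = f 0 + f 1 + f 2 + f 3"
proof -
  have UNIV_eq: "(UNIV::4 set) = {0,1,2,3}"
    using UNIV_4 by auto
  show ?thesis unfolding UNIV_eq by (simp add: ac_simps)
qed

lemma sum_axis_mult [simp]: "(\<Sum>i\<in>UNIV. axis a (1::real) $ i * F i) = F a"
proof -
  have "(\<Sum>i\<in>UNIV. axis a (1::real) $ i * F i) = (\<Sum>i\<in>UNIV. if i = a then F i else 0)"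
    by (rule sum.cong) (auto simp: axis_def)
  then show ?thesis by simp
qed

lemma sum_mult_axis [simp]: "(\<Sum>i\<in>UNIV. F i * axis a (1::real) $ i) = F a"
  using sum_axis_mult[of a F] by (simp add: mult.commute)

lemma sum_delta_mult: "(\<Sum>j\<in>UNIV. (if (i::4) = j then 1 else 0) * F j) = (F i :: 'a::semiring_1)"
proof -
  have "(\<Sum>j\<in>UNIV. (if i = j then 1 else 0) * F j) = (\<Sum>j\<in>UNIV. if j = i then F j else 0)"
    by (rule sum.cong) auto
  then show ?thesis by simp
qed

lemma sum_eta_mult: "(\<Sum>K\<in>UNIV. eta I K * f K) = eta I I * f I"
proof -
  have "(\<Sum>K\<in>UNIV. eta I K * f K) = (\<Sum>K\<in>UNIV. if K = I then eta I I * f I else 0)"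
    by (rule sum.cong) (auto simp: eta_def)
  then show ?thesis by simp
qed

lemma eta_simps [simp]:
  "eta 0 0 = -1" "eta 1 1 = 1" "eta 2 2 = 1" "eta 3 3 = 1"
  "eta 0 1 = 0" "eta 1 0 = 0" "eta 2 0 = 0" "eta 2 1 = 0" "eta 3 0 = 0" "eta 3 1 = 0"
  by (simp_all add: eta_def)

lemma has_derivative_pd:
  assumes "f differentiable (at x)"
  shows "(f has_derivative (\<lambda>h. \<Sum>a\<in>UNIV. h $ a * pd a f x)) (at x)"
proof -
  let ?D = "frechet_derivative f (at x)"
  have D: "(f has_derivative ?D) (at x)" and lin: "linear ?D"
    using assms frechet_derivative_works linear_frechet_derivative by blast+
  have "?D h = (\<Sum>a\<in>UNIV. h $ a * pd a f x)" for h
  proof -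
    have "h = (\<Sum>a\<in>UNIV. h $ a *\<^sub>R axis a 1)"
      by (simp add: vec_eq_iff axis_def sum.delta if_distrib cong: if_cong)
    then have "?D h = ?D (\<Sum>a\<in>UNIV. h $ a *\<^sub>R axis a 1)"
      by simp
    also have "\<dots> = (\<Sum>a\<in>UNIV. h $ a * pd a f x)"
      using lin by (simp add: linear_sum linear_scale pd_def)
    finally show ?thesis .
  qed
  then show ?thesis using D by (metis (no_types, lifting) ext)
qed

lemma pd_eq_derivative: "(f has_derivative D) (at x) \<Longrightarrow> pd a f x = D (axis a 1)"
  by (simp add: pd_def frechet_derivative_at[symmetric])

lemma pd_cong_open:
  assumes "open S" "x \<in> S" "\<And>y. y \<in> S \<Longrightarrow> f y = g y"
  shows "pd a f x = pd a g x"
proof -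
  have "(f has_derivative D) (at x) \<longleftrightarrow> (g has_derivative D) (at x)" for D
    using has_derivative_transform_within_open[of f D x UNIV S g]
      has_derivative_transform_within_open[of g D x UNIV S f] assms by metis
  then show ?thesis unfolding pd_def frechet_derivative_def by simp
qed

lemma pd_zero_open:
  assumes "open S" "x \<in> S" "\<And>y. y \<in> S \<Longrightarrow> f y = 0"
  shows "pd a f x = 0"
proof -
  have "pd a f x = pd a (\<lambda>y. 0) x"
    by (rule pd_cong_open[OF assms(1,2)]) (use assms(3) in simp)
  then show ?thesis by (simp add: pd_def)
qed

lemma differentiable_cong_open:
  assumes "open S" "x \<in> S" "\<And>y. y \<in> S \<Longrightarrow> f y = g y" "g differentiable (at x)"
  shows "f differentiable (at x)"
  using assms has_derivative_transform_within_open unfolding differentiable_def by metis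

lemma pd_diff: "f differentiable (at x) \<Longrightarrow> g differentiable (at x) \<Longrightarrow>
    pd a (\<lambda>y. f y - g y) x = pd a f x - pd a g x"
  by (rule trans[OF pd_eq_derivative[OF has_derivative_diff[OF has_derivative_pd has_derivative_pd]]])
    simp_all

lemma pd_mult: "f differentiable (at x) \<Longrightarrow> g differentiable (at x) \<Longrightarrow>
    pd a (\<lambda>y. f y * g y) x = pd a f x * g x + f x * pd a g x"
  by (rule trans[OF pd_eq_derivative[OF has_derivative_mult[OF has_derivative_pd has_derivative_pd]]])
    (simp_all add: algebra_simps)

lemma pd_cmult: "f differentiable (at x) \<Longrightarrow> pd a (\<lambda>y. c * f y) x = c * pd a f x"
  by (rule trans[OF pd_eq_derivative[OF has_derivative_mult_right[OF has_derivative_pd]]]) simp_all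

lemma pd_sum: "finite S \<Longrightarrow> (\<And>i. i \<in> S \<Longrightarrow> f i differentiable (at x)) \<Longrightarrow>
    pd a (\<lambda>y. \<Sum>i\<in>S. f i y) x = (\<Sum>i\<in>S. pd a (f i) x)"
  by (rule trans[OF pd_eq_derivative[OF has_derivative_sum[OF has_derivative_pd]]]) simp_all

lemma smooth_on_imp_differentiable: "smooth_on U f \<Longrightarrow> y \<in> U \<Longrightarrow> f differentiable (at y)"
  unfolding smooth_on_def by (drule spec[of _ "[]"]) simp

lemma smooth_on_imp_differentiable_pd:
  "smooth_on U f \<Longrightarrow> y \<in> U \<Longrightarrow> pd a f differentiable (at y)"
  unfolding smooth_on_def by (drule spec[of _ "[a]"]) simp

section \<open>Functions vanishing on a regular level set\<close>

lemma has_derivative_ball_estimate: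
  fixes f :: "'a::real_normed_vector \<Rightarrow> 'b::real_normed_vector"
  assumes "(f has_derivative L) (at x)" "open U" "x \<in> U" "\<epsilon> > 0"
  obtains d where "d > 0" "ball x d \<subseteq> U"
    "\<And>y. norm (y - x) < d \<Longrightarrow> norm (f y - f x - L (y - x)) \<le> \<epsilon> * norm (y - x)"
proof -
  obtain d1 where "d1 > 0"
    and d1: "\<forall>y. norm (y - x) < d1 \<longrightarrow> norm (f y - f x - L (y - x)) \<le> \<epsilon> * norm (y - x)"
    using assms(1,4) unfolding has_derivative_at_alt by blast
  obtain d2 where "d2 > 0" "ball x d2 \<subseteq> U" using assms(2,3) open_contains_ball by blast
  show ?thesis
    by (rule that[of "min d1 d2"]) (use \<open>d1 > 0\<close> \<open>d2 > 0\<close> \<open>ball x d2 \<subseteq> U\<close> d1 in auto)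
qed

lemma norm_cone_bound:
  fixes X v :: "'a::real_normed_vector"
  assumes "t \<ge> 0" "\<bar>s\<bar> \<le> \<kappa> * t"
  shows "norm (t *\<^sub>R X + s *\<^sub>R v) \<le> t * (norm X + \<kappa> * norm v)"
proof -
  have "norm (t *\<^sub>R X + s *\<^sub>R v) \<le> t * norm X + \<bar>s\<bar> * norm v"
    using assms(1) norm_triangle_ineq[of "t *\<^sub>R X" "s *\<^sub>R v"] by simp
  also have "\<dots> \<le> t * norm X + \<kappa> * t * norm v"
    using assms(2) by (simp add: mult_right_mono)
  finally show ?thesis by (simp add: algebra_simps)
qed

lemma zero_on_segment:
  fixes \<Omega> :: "'a::real_normed_vector \<Rightarrow> real"
  assumes cont: "continuous_on U \<Omega>" and r: "r > 0"
    and segment: "\<And>s. \<bar>s\<bar> \<le> r \<Longrightarrow> p + s *\<^sub>R v \<in> U"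
    and close: "\<And>s. \<bar>s\<bar> \<le> r \<Longrightarrow> \<bar>\<Omega> (p + s *\<^sub>R v) - s\<bar> \<le> r / 2"
  obtains s where "\<bar>s\<bar> \<le> r" "\<Omega> (p + s *\<^sub>R v) = 0"
proof -
  have "continuous_on {- r .. r} (\<lambda>s. \<Omega> (p + s *\<^sub>R v))"
  proof (rule continuous_on_compose2[OF cont])
    show "continuous_on {- r .. r} (\<lambda>s. p + s *\<^sub>R v)" by (intro continuous_intros)
    show "(\<lambda>s. p + s *\<^sub>R v) ` {- r .. r} \<subseteq> U" using segment by auto
  qed
  moreover have "\<Omega> (p + (- r) *\<^sub>R v) \<le> 0" "0 \<le> \<Omega> (p + r *\<^sub>R v)"
    using close[of "- r", unfolded abs_diff_le_iff] close[of r, unfolded abs_diff_le_iff] r by auto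
  ultimately obtain s where "- r \<le> s" "s \<le> r" "\<Omega> (p + s *\<^sub>R v) = 0"
    using IVT'[of "\<lambda>s. \<Omega> (p + s *\<^sub>R v)" "- r" 0 r] r by auto
  then show ?thesis by (intro that) (auto simp: abs_le_iff)
qed

lemma zero_near_tangent_line:
  fixes \<Omega> :: "'a::real_normed_vector \<Rightarrow> real"
  assumes U: "open U" "x \<in> U" and cont: "continuous_on U \<Omega>" and \<Omega>x: "\<Omega> x = 0"
    and d\<Omega>: "(\<Omega> has_derivative L) (at x)" and Lv: "L v = 1" and LX: "L X = 0"
    and \<kappa>: "\<kappa> > 0" and \<delta>: "\<delta> > 0"
  obtains t s where "0 < t" "t < \<delta>" "\<bar>s\<bar> \<le> \<kappa> * t"
    "x + t *\<^sub>R X + s *\<^sub>R v \<in> U" "\<Omega> (x + t *\<^sub>R X + s *\<^sub>R v) = 0"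
proof -
  define R where "R = norm X + \<kappa> * norm v + 1"
  have R: "R \<ge> 1" using \<kappa> by (simp add: R_def)
  obtain d where d: "d > 0" "ball x d \<subseteq> U"
    "\<And>y. norm (y - x) < d \<Longrightarrow> norm (\<Omega> y - \<Omega> x - L (y - x)) \<le> \<kappa> / (2 * R) * norm (y - x)"
    using has_derivative_ball_estimate[OF d\<Omega> U] \<kappa> R by (metis divide_pos_pos less_le_trans
        mult_pos_pos zero_less_numeral zero_less_one)
  define t where "t = min \<delta> d / (2 * R)"
  have "t \<le> min \<delta> d / 2" unfolding t_def using R d(1) \<delta> by (intro divide_left_mono) auto
  moreover have "t * R = min \<delta> d / 2" using R by (simp add: t_def)
  ultimately have t: "0 < t" "t < \<delta>" "t * R < d"
    using \<delta> d(1) R by (auto simp: t_def)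
  have near: "norm (t *\<^sub>R X + s *\<^sub>R v) < t * R" if "\<bar>s\<bar> \<le> \<kappa> * t" for s
    using norm_cone_bound[OF less_imp_le[OF t(1)] that, of X v] t(1) by (simp add: R_def algebra_simps)
  have line_in_U: "x + t *\<^sub>R X + s *\<^sub>R v \<in> U" if "\<bar>s\<bar> \<le> \<kappa> * t" for s
  proof -
    have "dist x (x + (t *\<^sub>R X + s *\<^sub>R v)) = norm (t *\<^sub>R X + s *\<^sub>R v)"
      by (metis add_diff_cancel_left' dist_commute dist_norm)
    then show ?thesis using near[OF that] t(3) d(2) by (auto simp: add.assoc)
  qed
  have \<Omega>_line: "\<bar>\<Omega> (x + t *\<^sub>R X + s *\<^sub>R v) - s\<bar> \<le> \<kappa> * t / 2" if "\<bar>s\<bar> \<le> \<kappa> * t" for s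
  proof -
    have "L (t *\<^sub>R X + s *\<^sub>R v) = s"
      using has_derivative_linear[OF d\<Omega>] Lv LX by (simp add: linear_add linear_scale)
    then have "\<bar>\<Omega> (x + t *\<^sub>R X + s *\<^sub>R v) - s\<bar> \<le> \<kappa> / (2 * R) * norm (t *\<^sub>R X + s *\<^sub>R v)"
      using d(3)[of "x + t *\<^sub>R X + s *\<^sub>R v"] near[OF that] t(3) \<Omega>x by (simp add: add.assoc)
    also have "\<dots> \<le> \<kappa> / (2 * R) * (t * R)"
      using near[OF that] \<kappa> R by (intro mult_left_mono) auto
    finally show ?thesis using R by (simp add: field_simps)
  qed
  obtain s where "\<bar>s\<bar> \<le> \<kappa> * t" "\<Omega> (x + t *\<^sub>R X + s *\<^sub>R v) = 0"
    using zero_on_segment[OF cont _ line_in_U \<Omega>_line, unfolded add.assoc] \<kappa> t(1)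
    by (auto simp: add.assoc)
  then show ?thesis using that t line_in_U by blast
qed

lemma has_derivative_level_set_bound:
  fixes \<Omega> f :: "'a::real_normed_vector \<Rightarrow> real"
  assumes U: "open U" "x \<in> U" and cont: "continuous_on U \<Omega>" and \<Omega>x: "\<Omega> x = 0"
    and d\<Omega>: "(\<Omega> has_derivative L) (at x)" and Lv: "L v = 1" and LX: "L X = 0"
    and df: "(f has_derivative K) (at x)"
    and vanish: "\<And>y. y \<in> U \<Longrightarrow> \<Omega> y = 0 \<Longrightarrow> f y = 0" and \<kappa>: "\<kappa> > 0"
  shows "\<bar>K X\<bar> \<le> \<kappa> * \<bar>K v\<bar>"
proof (rule field_le_epsilon)
  fix \<epsilon> :: real assume \<epsilon>: "\<epsilon> > 0"
  define R where "R = norm X + \<kappa> * norm v + 1"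
  have R: "R \<ge> 1" using \<kappa> by (simp add: R_def)
  obtain d where d: "d > 0"
    "\<And>y. norm (y - x) < d \<Longrightarrow> norm (f y - f x - K (y - x)) \<le> \<epsilon> / R * norm (y - x)"
    using has_derivative_ball_estimate[OF df open_UNIV UNIV_I, of "\<epsilon> / R"] \<epsilon> R by auto
  obtain t s where t: "0 < t" "t < d / R" and s: "\<bar>s\<bar> \<le> \<kappa> * t"
    and y: "x + t *\<^sub>R X + s *\<^sub>R v \<in> U" "\<Omega> (x + t *\<^sub>R X + s *\<^sub>R v) = 0"
    using zero_near_tangent_line[OF U cont \<Omega>x d\<Omega> Lv LX \<kappa>, of "d / R"] d R by auto
  have n: "norm (t *\<^sub>R X + s *\<^sub>R v) \<le> t * R"
    using norm_cone_bound[OF less_imp_le[OF t(1)] s, of X v] t(1) by (simp add: R_def algebra_simps)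
  with t R have "norm (t *\<^sub>R X + s *\<^sub>R v) < d" by (simp add: field_simps)
  then have "\<bar>t * K X + s * K v\<bar> \<le> \<epsilon> / R * norm (t *\<^sub>R X + s *\<^sub>R v)"
    using d(2)[of "x + t *\<^sub>R X + s *\<^sub>R v"] vanish[OF y] vanish[OF U(2) \<Omega>x]
      has_derivative_linear[OF df]
    by (simp add: linear_add linear_scale add.assoc)
  also have "\<dots> \<le> \<epsilon> / R * (t * R)" using n \<epsilon> R by (intro mult_left_mono) auto
  finally have "\<bar>t * K X + s * K v\<bar> \<le> t * \<epsilon>" using R by (simp add: mult.commute)
  moreover have "\<bar>s * K v\<bar> \<le> t * (\<kappa> * \<bar>K v\<bar>)"
    using mult_right_mono[OF s, of "\<bar>K v\<bar>"] by (simp add: abs_mult mult_ac)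
  moreover have "\<bar>t * K X\<bar> = t * \<bar>K X\<bar>" using t(1) by (simp add: abs_mult)
  ultimately have "t * \<bar>K X\<bar> \<le> t * (\<kappa> * \<bar>K v\<bar> + \<epsilon>)"
    by (simp add: algebra_simps)
  then show "\<bar>K X\<bar> \<le> \<kappa> * \<bar>K v\<bar> + \<epsilon>" using t(1) by simp
qed

lemma has_derivative_zero_along_level_set:
  fixes \<Omega> f :: "'a::real_normed_vector \<Rightarrow> real"
  assumes "open U" "x \<in> U" "continuous_on U \<Omega>" "\<Omega> x = 0"
    and "(\<Omega> has_derivative L) (at x)" "L v = 1" "L X = 0"
    and "(f has_derivative K) (at x)" "\<And>y. y \<in> U \<Longrightarrow> \<Omega> y = 0 \<Longrightarrow> f y = 0"
  shows "K X = 0"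
proof (rule ccontr)
  assume "K X \<noteq> 0"
  then have "\<bar>K X\<bar> / (\<bar>K v\<bar> + 1) > 0" by simp
  from has_derivative_level_set_bound[OF assms this]
  have "\<bar>K X\<bar> * (\<bar>K v\<bar> + 1) \<le> \<bar>K X\<bar> * \<bar>K v\<bar>"
    by (simp add: field_simps)
  with \<open>K X \<noteq> 0\<close> show False by (simp add: algebra_simps)
qed

section \<open>Symmetry of second partial derivatives\<close>

definition second_difference :: "(real^4 \<Rightarrow> real) \<Rightarrow> real^4 \<Rightarrow> 4 \<Rightarrow> 4 \<Rightarrow> real \<Rightarrow> real" where
  "second_difference f x a b h =
     f (x + h *\<^sub>R axis a 1 + h *\<^sub>R axis b 1) - f (x + h *\<^sub>R axis a 1) - f (x + h *\<^sub>R axis b 1) + f x"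

lemma second_difference_commute: "second_difference f x a b h = second_difference f x b a h"
  by (simp add: second_difference_def add_ac)

lemma has_real_derivative_pd_line:
  assumes "f differentiable (at (p + t *\<^sub>R axis a 1))"
  shows "((\<lambda>s. f (p + s *\<^sub>R axis a 1)) has_real_derivative pd a f (p + t *\<^sub>R axis a 1)) (at t)"
proof -
  let ?D = "\<lambda>h. \<Sum>c\<in>UNIV. h $ c * pd c f (p + t *\<^sub>R axis a 1)"
  have "((\<lambda>s. p + s *\<^sub>R axis a (1::real)) has_derivative (\<lambda>s. s *\<^sub>R axis a 1)) (at t)"
    by (auto intro!: derivative_eq_intros)
  from diff_chain_at[OF this has_derivative_pd[OF assms]]
  have "((\<lambda>s. f (p + s *\<^sub>R axis a 1)) has_derivative (\<lambda>s. ?D (s *\<^sub>R axis a 1))) (at t)"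
    by (simp add: o_def)
  moreover have "?D (s *\<^sub>R axis a 1) = pd a f (p + t *\<^sub>R axis a 1) * s" for s
    by (simp add: mult.assoc mult.commute[of s] sum_distrib_right[symmetric])
  ultimately show ?thesis
    unfolding has_field_derivative_def by (simp add: mult_commute_abs)
qed

lemma second_difference_mean_value:
  assumes h: "h > 0" and df: "\<And>y. y \<in> cball x (2 * h) \<Longrightarrow> f differentiable (at y)"
  obtains z where "0 < z" "z < h"
    "second_difference f x b a h =
       h * (pd a f (x + h *\<^sub>R axis b 1 + z *\<^sub>R axis a 1) - pd a f (x + z *\<^sub>R axis a 1))"
proof -
  have near: "x + w + t *\<^sub>R axis a 1 \<in> cball x (2 * h)"
    if "w = 0 \<or> w = h *\<^sub>R axis b 1" "0 \<le> t" "t \<le> h" for w t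
  proof -
    have "dist x (x + w + t *\<^sub>R axis a 1) = norm (w + t *\<^sub>R axis a 1)"
      by (metis add.assoc add_diff_cancel_left' dist_commute dist_norm)
    also have "\<dots> \<le> norm w + norm (t *\<^sub>R axis a (1::real))"
      by (rule norm_triangle_ineq)
    also have "\<dots> \<le> 2 * h" using that h by auto
    finally show ?thesis by simp
  qed
  define \<phi> where "\<phi> t = f (x + h *\<^sub>R axis b 1 + t *\<^sub>R axis a 1) - f (x + t *\<^sub>R axis a 1)" for t
  have "DERIV \<phi> t :> pd a f (x + h *\<^sub>R axis b 1 + t *\<^sub>R axis a 1) - pd a f (x + t *\<^sub>R axis a 1)"
    if "0 \<le> t" "t \<le> h" for t
    unfolding \<phi>_def
  proof (intro DERIV_diff)
    show "((\<lambda>t. f (x + h *\<^sub>R axis b 1 + t *\<^sub>R axis a 1)) has_real_derivative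
        pd a f (x + h *\<^sub>R axis b 1 + t *\<^sub>R axis a 1)) (at t)"
      using near[of "h *\<^sub>R axis b 1" t] that by (intro has_real_derivative_pd_line df) auto
    show "((\<lambda>t. f (x + t *\<^sub>R axis a 1)) has_real_derivative pd a f (x + t *\<^sub>R axis a 1)) (at t)"
      using near[of 0 t] that by (intro has_real_derivative_pd_line df) auto
  qed
  then obtain z where "0 < z" "z < h"
    "\<phi> h - \<phi> 0 = (h - 0) *
       (pd a f (x + h *\<^sub>R axis b 1 + z *\<^sub>R axis a 1) - pd a f (x + z *\<^sub>R axis a 1))"
    using MVT2[OF h, of \<phi> "\<lambda>t. pd a f (x + h *\<^sub>R axis b 1 + t *\<^sub>R axis a 1) - pd a f (x + t *\<^sub>R axis a 1)"]
    by blast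
  moreover have "\<phi> h - \<phi> 0 = second_difference f x b a h"
    by (simp add: \<phi>_def second_difference_def)
  ultimately show ?thesis using that by simp
qed

lemma second_difference_approx:
  assumes U: "open U" "x \<in> U" and df: "\<And>y. y \<in> U \<Longrightarrow> f differentiable (at y)"
    and dg: "pd a f differentiable (at x)" and \<epsilon>: "\<epsilon> > 0"
  obtains \<delta> where "\<delta> > 0" "\<And>h. 0 < h \<Longrightarrow> h < \<delta> \<Longrightarrow>
    \<bar>second_difference f x b a h - h\<^sup>2 * pd b (pd a f) x\<bar> \<le> \<epsilon> * h\<^sup>2"
proof -
  define g where "g = pd a f"
  define err where "err w = g (x + w) - g x - (\<Sum>c\<in>UNIV. w $ c * pd c g x)" for w
  obtain d where d: "d > 0" "ball x d \<subseteq> U" and estimate: "\<And>y. norm (y - x) < d \<Longrightarrow>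
      norm (g y - g x - (\<Sum>c\<in>UNIV. (y - x) $ c * pd c g x)) \<le> \<epsilon> / 3 * norm (y - x)"
    using has_derivative_ball_estimate[OF has_derivative_pd[OF dg[folded g_def]] U, of "\<epsilon> / 3"] \<epsilon>
    by auto
  have err_bound: "\<bar>err w\<bar> \<le> \<epsilon> / 3 * r" if "norm w \<le> r" "r < d" for w r
  proof -
    have "\<bar>err w\<bar> \<le> \<epsilon> / 3 * norm w"
      using estimate[of "x + w"] that by (simp add: err_def)
    also have "\<dots> \<le> \<epsilon> / 3 * r" using that \<epsilon> by (intro mult_left_mono) auto
    finally show ?thesis .
  qed
  show ?thesis
  proof
    show "d / 2 > 0" using d by simp
    fix h assume h: "0 < h" "h < d / 2"
    obtain z where z: "0 < z" "z < h" and \<Delta>: "second_difference f x b a h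
        = h * (g (x + h *\<^sub>R axis b 1 + z *\<^sub>R axis a 1) - g (x + z *\<^sub>R axis a 1))"
    proof (rule second_difference_mean_value[OF h(1)])
      have "cball x (2 * h) \<subseteq> U" using h d(2) by (auto simp: cball_subset_ball_iff)
      then show "f differentiable (at y)" if "y \<in> cball x (2 * h)" for y using df that by blast
    qed (auto simp: g_def)
    have "norm (h *\<^sub>R axis b 1 + z *\<^sub>R axis a (1::real)) \<le> 2 * h"
      using norm_triangle_ineq[of "h *\<^sub>R axis b (1::real)" "z *\<^sub>R axis a 1"] h z by simp
    moreover have "norm (z *\<^sub>R axis a (1::real)) \<le> h" using z by simp
    ultimately have "\<bar>err (h *\<^sub>R axis b 1 + z *\<^sub>R axis a 1) - err (z *\<^sub>R axis a 1)\<bar> \<le> \<epsilon> * h"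
      using err_bound[of "h *\<^sub>R axis b 1 + z *\<^sub>R axis a 1" "2 * h"]
        err_bound[of "z *\<^sub>R axis a 1" h] h by simp
    then have "\<bar>h * (err (h *\<^sub>R axis b 1 + z *\<^sub>R axis a 1) - err (z *\<^sub>R axis a 1))\<bar> \<le> h * (\<epsilon> * h)"
      using h(1) by (simp add: abs_mult mult_left_mono)
    moreover have "h * (err (h *\<^sub>R axis b 1 + z *\<^sub>R axis a 1) - err (z *\<^sub>R axis a 1))
        = second_difference f x b a h - h\<^sup>2 * pd b g x"
      unfolding \<Delta> err_def
      by (simp add: power2_eq_square algebra_simps sum.distrib sum_distrib_left[symmetric] add.assoc)
    ultimately show "\<bar>second_difference f x b a h - h\<^sup>2 * pd b (pd a f) x\<bar> \<le> \<epsilon> * h\<^sup>2"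
      by (simp add: g_def power2_eq_square mult_ac)
  qed
qed

(* Schwarz's theorem in Young's form. *)
lemma pd_pd_commute:
  assumes U: "open U" "x \<in> U" and df: "\<And>y. y \<in> U \<Longrightarrow> f differentiable (at y)"
    and "pd a f differentiable (at x)" "pd b f differentiable (at x)"
  shows "pd b (pd a f) x = pd a (pd b f) x"
proof -
  have "\<bar>pd b (pd a f) x - pd a (pd b f) x\<bar> \<le> \<epsilon>" if \<epsilon>: "\<epsilon> > 0" for \<epsilon>
  proof -
    have \<epsilon>2: "\<epsilon> / 2 > 0" using \<epsilon> by simp
    obtain \<delta>1 where \<delta>1: "\<delta>1 > 0" "\<And>h. 0 < h \<Longrightarrow> h < \<delta>1 \<Longrightarrow>
        \<bar>second_difference f x b a h - h\<^sup>2 * pd b (pd a f) x\<bar> \<le> \<epsilon> / 2 * h\<^sup>2"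
      using second_difference_approx[OF U df assms(4) \<epsilon>2] by blast
    obtain \<delta>2 where \<delta>2: "\<delta>2 > 0" "\<And>h. 0 < h \<Longrightarrow> h < \<delta>2 \<Longrightarrow>
        \<bar>second_difference f x a b h - h\<^sup>2 * pd a (pd b f) x\<bar> \<le> \<epsilon> / 2 * h\<^sup>2"
      using second_difference_approx[OF U df assms(5) \<epsilon>2] by blast
    define h where "h = min \<delta>1 \<delta>2 / 2"
    have h: "0 < h" "h < \<delta>1" "h < \<delta>2" using \<delta>1 \<delta>2 by (auto simp: h_def)
    have "\<bar>h\<^sup>2 * pd b (pd a f) x - h\<^sup>2 * pd a (pd b f) x\<bar> \<le> \<epsilon> * h\<^sup>2"
      using \<delta>1(2)[OF h(1,2)] \<delta>2(2)[OF h(1,3)] second_difference_commute[of f x a b h]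
      by linarith
    then show ?thesis
      using h(1) by (simp add: right_diff_distrib[symmetric] abs_mult mult.commute)
  qed
  then show ?thesis using dense_eq0_I[of "pd b (pd a f) x - pd a (pd b f) x"] by simp
qed

section \<open>Tetrads and the Levi-Civita connection\<close>

definition eta_matrix :: "real^4^4" where
  "eta_matrix = (\<chi> I J. eta I J)"

lemma eta_matrix_square: "eta_matrix ** eta_matrix = mat 1"
  by (simp add: eta_matrix_def vec_eq_iff matrix_matrix_mult_def mat_def sum_eta_mult)
    (simp add: eta_def)

lemma invertible_matrix_inv:
  fixes A :: "'a::semiring_1^'n^'n"
  assumes "invertible A"
  shows "A ** matrix_inv A = mat 1" "matrix_inv A ** A = mat 1"
  using someI_ex[OF assms[unfolded invertible_def]] by (simp_all add: matrix_inv_def)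

lemma matrix_inv_eq_left_inverse:
  fixes A B :: "'a::field^'n^'n"
  assumes "B ** A = mat 1"
  shows "matrix_inv A = B"
proof -
  have "invertible A" using assms invertible_left_inverse by blast
  then have "matrix_inv A = (B ** A) ** matrix_inv A" using assms by (simp add: matrix_mul_lid)
  also have "\<dots> = B"
    using invertible_matrix_inv(1)[OF \<open>invertible A\<close>] by (metis matrix_mul_assoc matrix_mul_rid)
  finally show ?thesis .
qed

definition lower_index :: "real^4^4 \<Rightarrow> (4 \<Rightarrow> real) \<Rightarrow> 4 \<Rightarrow> real" where
  "lower_index g V b = (\<Sum>d\<in>UNIV. V d * g $ d $ b)"

lemma orthonormal_tetrad_iff_matrix:
  "orthonormal_tetrad G e y \<longleftrightarrow>
     transpose (tetrad_matrix e y) ** G y ** tetrad_matrix e y = eta_matrix"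
proof -
  have "(transpose (tetrad_matrix e y) ** G y ** tetrad_matrix e y) $ I $ J
      = (\<Sum>a\<in>UNIV. \<Sum>b\<in>UNIV. G y $ a $ b * e I y $ a * e J y $ b)" for I J
  proof -
    have "(transpose (tetrad_matrix e y) ** G y ** tetrad_matrix e y) $ I $ J
        = (\<Sum>b\<in>UNIV. \<Sum>a\<in>UNIV. G y $ a $ b * e I y $ a * e J y $ b)"
      by (simp add: matrix_matrix_mult_def transpose_def tetrad_matrix_def sum_distrib_left
          sum_distrib_right mult_ac)
    also have "\<dots> = (\<Sum>a\<in>UNIV. \<Sum>b\<in>UNIV. G y $ a $ b * e I y $ a * e J y $ b)"
      by (rule sum.swap)
    finally show ?thesis .
  qed
  then show ?thesis
    by (simp add: orthonormal_tetrad_def vec_eq_iff eta_matrix_def)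
qed

lemma orthonormal_tetrad_matrix_inv:
  assumes "orthonormal_tetrad G e y"
  shows "matrix_inv (tetrad_matrix e y) = eta_matrix ** transpose (tetrad_matrix e y) ** G y"
    and "tetrad_matrix e y ** (eta_matrix ** transpose (tetrad_matrix e y) ** G y) = mat 1"
proof -
  let ?M = "tetrad_matrix e y"
  have "(eta_matrix ** transpose ?M ** G y) ** ?M = eta_matrix ** (transpose ?M ** G y ** ?M)"
    by (simp add: matrix_mul_assoc)
  also have "\<dots> = eta_matrix ** eta_matrix"
    using assms by (simp add: orthonormal_tetrad_iff_matrix)
  finally have "(eta_matrix ** transpose ?M ** G y) ** ?M = eta_matrix ** eta_matrix" .
  then have left: "(eta_matrix ** transpose ?M ** G y) ** ?M = mat 1"
    by (simp add: eta_matrix_square)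
  then show "matrix_inv ?M = eta_matrix ** transpose ?M ** G y"
    by (rule matrix_inv_eq_left_inverse)
  show "?M ** (eta_matrix ** transpose ?M ** G y) = mat 1"
    using left matrix_left_right_inverse by blast
qed

lemma cotetrad_eq_lower_index:
  assumes "orthonormal_tetrad G e y"
  shows "cotetrad e y J b = eta J J * lower_index (G y) (\<lambda>d. e J y $ d) b"
  using orthonormal_tetrad_matrix_inv(1)[OF assms]
  by (simp add: cotetrad_def lower_index_def eta_matrix_def matrix_matrix_mult_def transpose_def
      tetrad_matrix_def sum_distrib_left sum_distrib_right sum_eta_mult mult_ac)

lemma tetrad_cotetrad_complete:
  assumes "orthonormal_tetrad G e y"
  shows "(\<Sum>I\<in>UNIV. e I y $ a * cotetrad e y I b) = (if a = b then 1 else 0)"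
proof -
  have "(tetrad_matrix e y ** matrix_inv (tetrad_matrix e y)) $ a $ b = (if a = b then 1 else 0)"
    using orthonormal_tetrad_matrix_inv[OF assms] by (simp add: mat_def)
  then show ?thesis
    by (simp add: matrix_matrix_mult_def tetrad_matrix_def cotetrad_def)
qed

lemma orthonormal_tetrad_invertible:
  assumes "orthonormal_tetrad G e y"
  shows "invertible (G y)"
proof -
  let ?M = "tetrad_matrix e y"
  have "(?M ** eta_matrix ** transpose ?M) ** G y = mat 1"
    using orthonormal_tetrad_matrix_inv(2)[OF assms] by (simp add: matrix_mul_assoc)
  then show ?thesis using invertible_left_inverse by blast
qed

lemma metric_mult_ginv:
  assumes "invertible (G y)"
  shows "(\<Sum>d\<in>UNIV. G y $ a $ d * ginv G y d b) = (if a = b then 1 else 0)"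
proof -
  have "G y ** matrix_inv (G y) = mat 1"
    using invertible_matrix_inv(1)[OF assms] .
  then show ?thesis
    by (simp add: ginv_def matrix_matrix_mult_def mat_def vec_eq_iff)
qed

lemma christoffel_sym:
  assumes "open U" "x \<in> U" "\<And>y a b. y \<in> U \<Longrightarrow> G y $ a $ b = G y $ b $ a"
  shows "christoffel G x c a b = christoffel G x c b a"
proof -
  have "pd d (\<lambda>y. G y $ a $ b) x = pd d (\<lambda>y. G y $ b $ a) x" for d
    by (rule pd_cong_open[OF assms(1,2)]) (use assms(3) in auto)
  then show ?thesis by (simp add: christoffel_def algebra_simps)
qed

lemma christoffel_lowered:
  assumes "invertible (G x)"
  shows "(\<Sum>c\<in>UNIV. G x $ d $ c * christoffel G x c a b) =
    (pd a (\<lambda>y. G y $ d $ b) x + pd b (\<lambda>y. G y $ d $ a) x - pd d (\<lambda>y. G y $ a $ b) x) / 2"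
proof -
  define \<Gamma> where "\<Gamma> f = (pd a (\<lambda>y. G y $ f $ b) x + pd b (\<lambda>y. G y $ f $ a) x
      - pd f (\<lambda>y. G y $ a $ b) x) / 2" for f
  have "(\<Sum>c\<in>UNIV. G x $ d $ c * christoffel G x c a b)
      = (\<Sum>c\<in>UNIV. \<Sum>f\<in>UNIV. G x $ d $ c * ginv G x c f * \<Gamma> f)"
    by (simp add: christoffel_def \<Gamma>_def sum_distrib_left mult_ac)
  also have "\<dots> = (\<Sum>f\<in>UNIV. (\<Sum>c\<in>UNIV. G x $ d $ c * ginv G x c f) * \<Gamma> f)"
    by (subst sum.swap) (simp add: sum_distrib_right)
  also have "\<dots> = \<Gamma> d"
    by (simp add: metric_mult_ginv[of G x, OF assms] sum_delta_mult)
  finally show ?thesis by (simp add: \<Gamma>_def)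
qed

lemma cov_deriv_grad_sym:
  assumes U: "open U" "x \<in> U" and G_sym: "\<And>y a b. y \<in> U \<Longrightarrow> G y $ a $ b = G y $ b $ a"
    and "\<And>y. y \<in> U \<Longrightarrow> f differentiable (at y)"
    and "pd a f differentiable (at x)" "pd b f differentiable (at x)"
  shows "cov_deriv G (grad f) x a b = cov_deriv G (grad f) x b a"
  using pd_pd_commute[OF U assms(4-6)] christoffel_sym[OF U G_sym]
  by (simp add: cov_deriv_def grad_def)

lemma cov_deriv_diff:
  assumes "\<And>c. (\<lambda>y. v y c) differentiable (at x)" "\<And>c. (\<lambda>y. w y c) differentiable (at x)"
  shows "cov_deriv G (\<lambda>y c. v y c - w y c) x a b = cov_deriv G v x a b - cov_deriv G w x a b"
  by (simp add: cov_deriv_def pd_diff assms sum_subtractf right_diff_distrib)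

lemma cov_deriv_cmult:
  assumes "\<And>c. (\<lambda>y. w y c) differentiable (at x)"
  shows "cov_deriv G (\<lambda>y c. s * w y c) x a b = s * cov_deriv G w x a b"
  by (simp add: cov_deriv_def pd_cmult assms sum_distrib_left right_diff_distrib mult_ac)

lemma cov_deriv_cong_open:
  assumes "open S" "x \<in> S" "\<And>y c. y \<in> S \<Longrightarrow> v y c = w y c"
  shows "cov_deriv G v x a b = cov_deriv G w x a b"
proof -
  have "pd a (\<lambda>y. v y b) x = pd a (\<lambda>y. w y b) x"
    by (rule pd_cong_open[OF assms(1,2)]) (use assms(3) in simp)
  then show ?thesis using assms(2,3) by (simp add: cov_deriv_def)
qed

lemma differentiable_lower_index:
  assumes "\<And>a b. (\<lambda>y. G y $ a $ b) differentiable (at x)" "\<And>d. (\<lambda>y. V y d) differentiable (at x)"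
  shows "(\<lambda>y. lower_index (G y) (V y) b) differentiable (at x)"
  unfolding lower_index_def by (intro differentiable_sum ballI differentiable_mult assms) auto

lemma pd_lower_index:
  assumes "\<And>a b. (\<lambda>y. G y $ a $ b) differentiable (at x)" "\<And>d. (\<lambda>y. V y d) differentiable (at x)"
  shows "pd c (\<lambda>y. lower_index (G y) (V y) b) x =
    (\<Sum>d\<in>UNIV. pd c (\<lambda>y. V y d) x * G x $ d $ b + V x d * pd c (\<lambda>y. G y $ d $ b) x)"
  unfolding lower_index_def
  by (simp add: pd_sum pd_mult assms)

lemma christoffel_lower_index:
  assumes "invertible (G x)"
  shows "(\<Sum>e\<in>UNIV. christoffel G x e c b * lower_index (G x) V e) = (\<Sum>d\<in>UNIV. V d *
    ((pd c (\<lambda>y. G y $ d $ b) x + pd b (\<lambda>y. G y $ d $ c) x - pd d (\<lambda>y. G y $ c $ b) x) / 2))"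
proof -
  have "(\<Sum>e\<in>UNIV. christoffel G x e c b * lower_index (G x) V e)
      = (\<Sum>d\<in>UNIV. V d * (\<Sum>e\<in>UNIV. G x $ d $ e * christoffel G x e c b))"
    unfolding lower_index_def by (simp add: sum_distrib_left sum_distrib_right mult_ac) (rule sum.swap)
  then show ?thesis by (simp add: christoffel_lowered[of G x, OF assms])
qed

definition bilinear_form :: "(4 \<Rightarrow> 4 \<Rightarrow> real) \<Rightarrow> (4 \<Rightarrow> real) \<Rightarrow> (4 \<Rightarrow> real) \<Rightarrow> real" where
  "bilinear_form H X Y = (\<Sum>a\<in>UNIV. \<Sum>b\<in>UNIV. X a * Y b * H a b)"

lemma bilinear_form_sym:
  assumes "\<And>a b. H a b = H b a"
  shows "bilinear_form H X Y = bilinear_form H Y X"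
  unfolding bilinear_form_def by (subst sum.swap) (simp add: assms mult_ac)

lemma bilinear_form_transpose: "bilinear_form H X Y = bilinear_form (\<lambda>a b. H b a) Y X"
  unfolding bilinear_form_def by (subst sum.swap) (simp add: mult_ac)

lemma bilinear_form_combination_left:
  "bilinear_form H (\<lambda>a. s * X a + t * Y a + r * Z a) W
     = s * bilinear_form H X W + t * bilinear_form H Y W + r * bilinear_form H Z W"
  by (simp add: bilinear_form_def sum.distrib sum_distrib_left algebra_simps)

lemma bilinear_form_zero_of_complex_contractions:
  fixes \<alpha> \<beta> :: "4 \<Rightarrow> real"
  defines "m a \<equiv> (complex_of_real (\<alpha> a) + \<i> * complex_of_real (\<beta> a)) / 2"
  assumes expansion: "(\<Sum>a\<in>UNIV. \<Sum>b\<in>UNIV. m a * cnj (m b) * complex_of_real (H a b)) = 0"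
    and shear: "(\<Sum>a\<in>UNIV. \<Sum>b\<in>UNIV. m a * m b * complex_of_real (H a b)) = 0"
    and "p \<in> {\<alpha>, \<beta>}" "q \<in> {\<alpha>, \<beta>}"
  shows "bilinear_form H p q = 0"
proof -
  have "Re (\<Sum>a\<in>UNIV. \<Sum>b\<in>UNIV. m a * cnj (m b) * complex_of_real (H a b))
      = (bilinear_form H \<alpha> \<alpha> + bilinear_form H \<beta> \<beta>) / 4"
    by (simp add: Re_sum m_def bilinear_form_def sum.distrib sum_divide_distrib algebra_simps
        add_divide_distrib)
  moreover have "Im (\<Sum>a\<in>UNIV. \<Sum>b\<in>UNIV. m a * cnj (m b) * complex_of_real (H a b))
      = (bilinear_form H \<beta> \<alpha> - bilinear_form H \<alpha> \<beta>) / 4"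
    by (simp add: Im_sum m_def bilinear_form_def sum_subtractf sum_divide_distrib algebra_simps
        diff_divide_distrib)
  moreover have "Re (\<Sum>a\<in>UNIV. \<Sum>b\<in>UNIV. m a * m b * complex_of_real (H a b))
      = (bilinear_form H \<alpha> \<alpha> - bilinear_form H \<beta> \<beta>) / 4"
    by (simp add: Re_sum m_def bilinear_form_def sum_subtractf sum_divide_distrib algebra_simps
        diff_divide_distrib)
  moreover have "Im (\<Sum>a\<in>UNIV. \<Sum>b\<in>UNIV. m a * m b * complex_of_real (H a b))
      = (bilinear_form H \<alpha> \<beta> + bilinear_form H \<beta> \<alpha>) / 4"
    by (simp add: Im_sum m_def bilinear_form_def sum.distrib sum_divide_distrib algebra_simps
        add_divide_distrib)
  ultimately show ?thesis
    using expansion shear \<open>p \<in> {\<alpha>, \<beta>}\<close> \<open>q \<in> {\<alpha>, \<beta>}\<close> by auto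
qed

lemma pd_metric_norm:
  fixes V :: "real^4 \<Rightarrow> 4 \<Rightarrow> real"
  assumes U: "open U" "x \<in> U" and G_sym: "\<And>y a b. y \<in> U \<Longrightarrow> G y $ a $ b = G y $ b $ a"
    and dG: "\<And>a b. (\<lambda>y. G y $ a $ b) differentiable (at x)" and inv: "invertible (G x)"
    and dV: "\<And>d. (\<lambda>y. V y d) differentiable (at x)"
  shows "pd c (\<lambda>y. \<Sum>b\<in>UNIV. V y b * lower_index (G y) (V y) b) x
       = 2 * (\<Sum>b\<in>UNIV. V x b * cov_deriv G (\<lambda>y. lower_index (G y) (V y)) x c b)"
proof -
  define P where "P a d b = pd a (\<lambda>y. G y $ d $ b) x" for a d b
  define W where "W d = pd c (\<lambda>y. V y d) x" for d
  have P_sym: "P a d b = P a b d" for a d b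
    unfolding P_def by (rule pd_cong_open[OF U]) (use G_sym in auto)
  have G_sym_x: "G x $ a $ b = G x $ b $ a" for a b using G_sym U(2) by blast
  have pd_lower: "pd c (\<lambda>y. lower_index (G y) (V y) b) x
      = (\<Sum>d\<in>UNIV. W d * G x $ d $ b + V x d * P c d b)" for b
    using pd_lower_index[of G x V c b, OF dG dV] by (simp add: W_def P_def)
  define Gx where "Gx b d = G x $ d $ b" for b d
  have "bilinear_form (\<lambda>b d. P b d c) (V x) (V x) = bilinear_form (\<lambda>b d. P d c b) (V x) (V x)"
    by (subst bilinear_form_transpose) (simp add: P_sym[of _ _ c])
  moreover have "bilinear_form Gx W (V x) = bilinear_form Gx (V x) W"
    by (rule bilinear_form_sym) (simp add: Gx_def G_sym_x)
  moreover have "pd c (\<lambda>y. \<Sum>b\<in>UNIV. V y b * lower_index (G y) (V y) b) x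
      = (\<Sum>b\<in>UNIV. W b * lower_index (G x) (V x) b + V x b * pd c (\<lambda>y. lower_index (G y) (V y) b) x)"
    by (simp add: pd_sum pd_mult dV differentiable_lower_index[OF dG dV] W_def)
  moreover have "\<dots> = bilinear_form Gx W (V x) + bilinear_form Gx (V x) W
      + bilinear_form (\<lambda>b d. P c d b) (V x) (V x)"
    unfolding pd_lower
    by (simp add: bilinear_form_def Gx_def lower_index_def sum.distrib sum_distrib_left algebra_simps)
  moreover have "2 * (\<Sum>b\<in>UNIV. V x b * cov_deriv G (\<lambda>y. lower_index (G y) (V y)) x c b)
      = 2 * bilinear_form Gx (V x) W + bilinear_form (\<lambda>b d. P c d b) (V x) (V x)
        - bilinear_form (\<lambda>b d. P b d c) (V x) (V x) + bilinear_form (\<lambda>b d. P d c b) (V x) (V x)"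
    by (simp add: cov_deriv_def pd_lower christoffel_lower_index[of G x, OF inv] bilinear_form_def Gx_def
        P_def[symmetric] sum.distrib sum_subtractf sum_distrib_left sum_divide_distrib
        algebra_simps add_divide_distrib diff_divide_distrib)
  ultimately show ?thesis by simp
qed

section \<open>An orthonormal tetrad adapted to null infinity\<close>

locale scri_tetrad =
  fixes U :: "(real^4) set" and G :: "real^4 \<Rightarrow> real^4^4" and \<Omega> :: "real^4 \<Rightarrow> real"
    and e :: "4 \<Rightarrow> real^4 \<Rightarrow> real^4"
  assumes open_U: "open U"
    and G_differentiable: "\<And>a b y. y \<in> U \<Longrightarrow> (\<lambda>z. G z $ a $ b) differentiable (at y)"
    and G_sym: "\<And>a b y. y \<in> U \<Longrightarrow> G y $ a $ b = G y $ b $ a"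
    and \<Omega>_differentiable: "\<And>y. y \<in> U \<Longrightarrow> \<Omega> differentiable (at y)"
    and pd_\<Omega>_differentiable: "\<And>a y. y \<in> U \<Longrightarrow> pd a \<Omega> differentiable (at y)"
    and e_differentiable: "\<And>I a y. y \<in> U \<Longrightarrow> (\<lambda>z. e I z $ a) differentiable (at y)"
    and orthonormal: "\<And>y. y \<in> U \<Longrightarrow> orthonormal_tetrad G e y"
    and grad_nonzero: "\<And>y. y \<in> U \<Longrightarrow> \<Omega> y = 0 \<Longrightarrow> \<exists>a. pd a \<Omega> y \<noteq> 0"
    and n_frame: "\<And>y a. y \<in> U \<Longrightarrow> \<Omega> y = 0 \<Longrightarrow> (e 0 y $ a + e 1 y $ a) / 2 = nvec G \<Omega> y a"
begin

(* The extension of n^a off scri given by the tetrad; unlike the gradient of Omega it is null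
   on all of U, which is what allows differentiating n.n. *)
definition null_field :: "real^4 \<Rightarrow> 4 \<Rightarrow> real" where
  "null_field y a = (e 0 y $ a + e 1 y $ a) / 2"

abbreviation null_covector :: "real^4 \<Rightarrow> 4 \<Rightarrow> real" where
  "null_covector y \<equiv> lower_index (G y) (null_field y)"

abbreviation null_defect :: "real^4 \<Rightarrow> 4 \<Rightarrow> real" where
  "null_defect y b \<equiv> null_covector y b - pd b \<Omega> y"

abbreviation hessian :: "real^4 \<Rightarrow> 4 \<Rightarrow> 4 \<Rightarrow> real" where
  "hessian x \<equiv> cov_deriv G (grad \<Omega>) x"

lemma differentiable_null_field: "y \<in> U \<Longrightarrow> (\<lambda>z. null_field z d) differentiable (at y)"
  unfolding null_field_def by (intro derivative_intros e_differentiable) auto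

lemma differentiable_null_covector: "y \<in> U \<Longrightarrow> (\<lambda>z. null_covector z b) differentiable (at y)"
  by (intro differentiable_lower_index G_differentiable differentiable_null_field)

lemma null_field_null:
  assumes "y \<in> U"
  shows "(\<Sum>b\<in>UNIV. null_field y b * null_covector y b) = 0"
proof -
  have "(\<Sum>a\<in>UNIV. \<Sum>b\<in>UNIV. G y $ a $ b * e I y $ a * e J y $ b) = eta I J" for I J
    using orthonormal[OF assms] by (simp add: orthonormal_tetrad_def)
  note orth = this[of 0 0] this[of 0 1] this[of 1 0] this[of 1 1]
  have "(\<Sum>b\<in>UNIV. null_field y b * null_covector y b)
      = (\<Sum>a\<in>UNIV. \<Sum>b\<in>UNIV. G y $ a $ b * null_field y a * null_field y b)"
    unfolding lower_index_def sum_distrib_left by (subst sum.swap) (simp add: mult_ac)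
  also have "\<dots> = (eta 0 0 + eta 0 1 + eta 1 0 + eta 1 1) / 4"
    using orth by (simp add: null_field_def sum.distrib sum_divide_distrib[symmetric]
        algebra_simps add_divide_distrib)
  finally show ?thesis by simp
qed

lemma null_covector_eq_grad:
  assumes "y \<in> U" "\<Omega> y = 0"
  shows "null_covector y b = pd b \<Omega> y"
proof -
  have "null_covector y b = (\<Sum>d\<in>UNIV. (\<Sum>c\<in>UNIV. ginv G y d c * pd c \<Omega> y) * G y $ d $ b)"
    using n_frame[OF assms] by (simp add: lower_index_def null_field_def nvec_def)
  also have "\<dots> = (\<Sum>c\<in>UNIV. (\<Sum>d\<in>UNIV. G y $ b $ d * ginv G y d c) * pd c \<Omega> y)"
    using G_sym[OF assms(1)]
    by (simp add: sum_distrib_left sum_distrib_right mult_ac) (rule sum.swap)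
  also have "\<dots> = pd b \<Omega> y"
    using orthonormal_tetrad_invertible[OF orthonormal[OF assms(1)]]
    by (simp add: metric_mult_ginv sum_delta_mult)
  finally show ?thesis .
qed

lemma pd_vanishing_on_scri_tangent:
  assumes x: "x \<in> U" "\<Omega> x = 0" and X: "tangent_scri \<Omega> x X"
    and f: "f differentiable (at x)" "\<And>y. y \<in> U \<Longrightarrow> \<Omega> y = 0 \<Longrightarrow> f y = 0"
  shows "(\<Sum>a\<in>UNIV. X $ a * pd a f x) = 0"
proof -
  obtain a0 where a0: "pd a0 \<Omega> x \<noteq> 0" using grad_nonzero x by blast
  define v where "v = (1 / pd a0 \<Omega> x) *\<^sub>R axis a0 (1::real)"
  have "(\<Sum>a\<in>UNIV. v $ a * pd a \<Omega> x) = (\<Sum>a\<in>UNIV. axis a0 1 $ a * (pd a \<Omega> x / pd a0 \<Omega> x))"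
    unfolding v_def by (rule sum.cong) auto
  then have v: "(\<Sum>a\<in>UNIV. v $ a * pd a \<Omega> x) = 1"
    using a0 sum_axis_mult[of a0 "\<lambda>a. pd a \<Omega> x / pd a0 \<Omega> x"] by simp
  have "continuous_on U \<Omega>"
    using \<Omega>_differentiable
    by (intro continuous_at_imp_continuous_on ballI differentiable_imp_continuous_within) auto
  from has_derivative_zero_along_level_set[OF open_U x(1) this x(2)
      has_derivative_pd[OF \<Omega>_differentiable[OF x(1)]] v X[unfolded tangent_scri_def]
      has_derivative_pd[OF f(1)] f(2)]
  show ?thesis .
qed

lemma tetrad_pd_\<Omega>:
  assumes "x \<in> U" "\<Omega> x = 0"
  shows "(\<Sum>a\<in>UNIV. e I x $ a * pd a \<Omega> x) = (eta I 0 + eta I 1) / 2"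
proof -
  have "(\<Sum>a\<in>UNIV. e I x $ a * pd a \<Omega> x) = (\<Sum>a\<in>UNIV. \<Sum>d\<in>UNIV. e I x $ a * (null_field x d * G x $ d $ a))"
    by (simp add: null_covector_eq_grad[OF assms, symmetric] lower_index_def sum_distrib_left)
  also have "\<dots> = ((\<Sum>a\<in>UNIV. \<Sum>d\<in>UNIV. G x $ a $ d * e I x $ a * e 0 x $ d)
                 + (\<Sum>a\<in>UNIV. \<Sum>d\<in>UNIV. G x $ a $ d * e I x $ a * e 1 x $ d)) / 2"
    using G_sym[OF assms(1)]
    by (simp add: null_field_def sum.distrib[symmetric] sum_divide_distrib algebra_simps
        add_divide_distrib)
  also have "\<dots> = (eta I 0 + eta I 1) / 2"
    using orthonormal[OF assms(1)] by (simp add: orthonormal_tetrad_def)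
  finally show ?thesis .
qed

lemma screen_tangent:
  assumes "x \<in> U" "\<Omega> x = 0" "j \<in> {2, 3}"
  shows "tangent_scri \<Omega> x (e j x)"
  using tetrad_pd_\<Omega>[OF assms(1,2), of j] assms(3) by (auto simp: tangent_scri_def)

lemma tangent_tetrad_decomposition:
  assumes x: "x \<in> U" "\<Omega> x = 0" and X: "tangent_scri \<Omega> x X"
  obtains c0 c2 c3 where "\<And>a. X $ a = c0 * null_field x a + c2 * e 2 x $ a + c3 * e 3 x $ a"
proof -
  define c where "c J = (\<Sum>b\<in>UNIV. cotetrad e x J b * X $ b)" for J
  have X_eq: "X $ a = (\<Sum>J\<in>UNIV. c J * e J x $ a)" for a
  proof -
    have "(\<Sum>J\<in>UNIV. c J * e J x $ a)
        = (\<Sum>b\<in>UNIV. (\<Sum>J\<in>UNIV. e J x $ a * cotetrad e x J b) * X $ b)"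
      unfolding c_def by (simp add: sum_distrib_left sum_distrib_right mult_ac) (rule sum.swap)
    also have "\<dots> = X $ a"
      by (simp add: tetrad_cotetrad_complete[OF orthonormal[OF x(1)]] sum_delta_mult)
    finally show ?thesis by simp
  qed
  have "0 = (\<Sum>a\<in>UNIV. (\<Sum>J\<in>UNIV. c J * e J x $ a) * pd a \<Omega> x)"
    using X X_eq by (simp add: tangent_scri_def)
  also have "\<dots> = (\<Sum>J\<in>UNIV. c J * (\<Sum>a\<in>UNIV. e J x $ a * pd a \<Omega> x))"
    by (simp add: sum_distrib_left sum_distrib_right mult_ac) (rule sum.swap)
  also have "\<dots> = (c 1 - c 0) / 2"
    by (simp only: tetrad_pd_\<Omega>[OF x]) (simp add: sum_UNIV_4 field_simps)
  finally have "c 1 = c 0" by simp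
  then have "X $ a = 2 * c 0 * null_field x a + c 2 * e 2 x $ a + c 3 * e 3 x $ a" for a
    by (simp add: X_eq sum_UNIV_4 null_field_def algebra_simps)
  then show ?thesis by (rule that)
qed

lemma cov_deriv_null_covector:
  assumes "x \<in> U" "\<Omega> x = 0"
  shows "cov_deriv G null_covector x a b = hessian x a b + pd a (\<lambda>y. null_defect y b) x"
  using assms
  by (simp add: cov_deriv_def grad_def pd_diff differentiable_null_covector pd_\<Omega>_differentiable
      null_covector_eq_grad)

lemma null_defect_tangent:
  assumes x: "x \<in> U" "\<Omega> x = 0" and X: "tangent_scri \<Omega> x X"
  shows "(\<Sum>a\<in>UNIV. X $ a * pd a (\<lambda>y. null_defect y b) x) = 0"
proof (rule pd_vanishing_on_scri_tangent[OF x X])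
  show "(\<lambda>y. null_defect y b) differentiable (at x)"
    using x by (intro derivative_intros differentiable_null_covector pd_\<Omega>_differentiable)
  show "null_defect y b = 0" if "y \<in> U" "\<Omega> y = 0" for y
    using null_covector_eq_grad[OF that] by simp
qed

lemma hessian_tangent_null_field:
  assumes x: "x \<in> U" "\<Omega> x = 0" and X: "tangent_scri \<Omega> x X"
  shows "bilinear_form (hessian x) (\<lambda>a. X $ a) (null_field x) = 0"
proof -
  note defect = null_defect_tangent[OF x X]
  have "pd a (\<lambda>y. \<Sum>b\<in>UNIV. null_field y b * null_covector y b) x = 0" for a
    by (rule pd_zero_open[OF open_U x(1)]) (rule null_field_null)
  then have null: "(\<Sum>b\<in>UNIV. null_field x b * cov_deriv G null_covector x a b) = 0" for a
    using pd_metric_norm[where V = null_field and c = a, OF open_U x(1) G_sym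
        G_differentiable[OF x(1)] orthonormal_tetrad_invertible[OF orthonormal[OF x(1)]]
        differentiable_null_field[OF x(1)]]
    by simp
  have "bilinear_form (hessian x) (\<lambda>a. X $ a) (null_field x)
      = (\<Sum>a\<in>UNIV. X $ a * (\<Sum>b\<in>UNIV. null_field x b * cov_deriv G null_covector x a b))
        - (\<Sum>a\<in>UNIV. \<Sum>b\<in>UNIV. X $ a *
             (null_field x b * pd a (\<lambda>y. null_defect y b) x))"
    by (simp add: bilinear_form_def cov_deriv_null_covector[OF x] sum_distrib_left algebra_simps
        sum_subtractf sum.distrib)
  also have "(\<Sum>a\<in>UNIV. \<Sum>b\<in>UNIV. X $ a *
             (null_field x b * pd a (\<lambda>y. null_defect y b) x))
      = (\<Sum>b\<in>UNIV. null_field x b *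
             (\<Sum>a\<in>UNIV. X $ a * pd a (\<lambda>y. null_defect y b) x))"
    by (subst sum.swap) (simp add: sum_distrib_left mult_ac)
  also have "(\<Sum>a\<in>UNIV. X $ a * (\<Sum>b\<in>UNIV. null_field x b * cov_deriv G null_covector x a b))
      - (\<Sum>b\<in>UNIV. null_field x b *
             (\<Sum>a\<in>UNIV. X $ a * pd a (\<lambda>y. null_defect y b) x)) = 0"
    by (simp add: null defect)
  finally show ?thesis .
qed

lemma hessian_screen_zero:
  assumes "expansion G e \<Omega> x = 0" "shear G e \<Omega> x = 0" "i \<in> {2, 3}" "j \<in> {2, 3}"
  shows "bilinear_form (hessian x) (\<lambda>a. e i x $ a) (\<lambda>a. e j x $ a) = 0"
  using bilinear_form_zero_of_complex_contractions[of "\<lambda>a. e 2 x $ a" "\<lambda>a. e 3 x $ a" "hessian x"]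
    assms
  by (auto simp: expansion_def shear_def mvec_def)

lemma hessian_tangent_screen_zero:
  assumes x: "x \<in> U" "\<Omega> x = 0" and X: "tangent_scri \<Omega> x X"
    and "expansion G e \<Omega> x = 0" "shear G e \<Omega> x = 0" and j: "j \<in> {2, 3}"
  shows "bilinear_form (hessian x) (\<lambda>a. X $ a) (\<lambda>b. e j x $ b) = 0"
proof -
  obtain c0 c2 c3 where X_eq: "\<And>a. X $ a = c0 * null_field x a + c2 * e 2 x $ a + c3 * e 3 x $ a"
    using tangent_tetrad_decomposition[OF x X] by blast
  have "hessian x a b = hessian x b a" for a b
    by (rule cov_deriv_grad_sym[OF open_U x(1) G_sym \<Omega>_differentiable
          pd_\<Omega>_differentiable[OF x(1)] pd_\<Omega>_differentiable[OF x(1)]])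
  then have "bilinear_form (hessian x) (null_field x) (\<lambda>b. e j x $ b)
      = bilinear_form (hessian x) (\<lambda>b. e j x $ b) (null_field x)"
    by (rule bilinear_form_sym)
  also have "\<dots> = 0"
    using hessian_tangent_null_field[OF x screen_tangent[OF x j]] .
  finally show ?thesis
    unfolding X_eq bilinear_form_combination_left using hessian_screen_zero assms j by simp
qed

lemma cotetrad_difference:
  assumes "y \<in> U"
  shows "cotetrad e y 1 c - cotetrad e y 0 c = 2 * null_covector y c"
proof -
  have "cotetrad e y 1 c - cotetrad e y 0 c
      = (\<Sum>d\<in>UNIV. e 1 y $ d * G y $ d $ c) + (\<Sum>d\<in>UNIV. e 0 y $ d * G y $ d $ c)"
    using cotetrad_eq_lower_index[OF orthonormal[OF assms]] by (simp add: lower_index_def)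
  also have "\<dots> = 2 * null_covector y c"
    unfolding lower_index_def null_field_def sum_distrib_left sum.distrib[symmetric]
    by (intro sum.cong) (simp_all add: field_simps)
  finally show ?thesis .
qed

lemma differentiable_cotetrad:
  assumes x: "x \<in> U"
  shows "(\<lambda>y. cotetrad e y J c) differentiable (at x)"
proof (rule differentiable_cong_open[OF open_U x])
  show "cotetrad e y J c = eta J J * lower_index (G y) (\<lambda>d. e J y $ d) c" if "y \<in> U" for y
    using cotetrad_eq_lower_index[OF orthonormal[OF that]] .
  show "(\<lambda>y. eta J J * lower_index (G y) (\<lambda>d. e J y $ d) c) differentiable (at x)"
    using x by (intro derivative_intros differentiable_lower_index G_differentiable e_differentiable)
qed

lemma conn_form_difference:
  assumes x: "x \<in> U"
  shows "conn_form G e x a I 1 - conn_form G e x a I 0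
    = 2 * eta I I * (\<Sum>b\<in>UNIV. e I x $ b * cov_deriv G null_covector x a b)"
proof -
  have "cov_deriv G (\<lambda>y c. cotetrad e y 1 c) x a b - cov_deriv G (\<lambda>y c. cotetrad e y 0 c) x a b
      = 2 * cov_deriv G null_covector x a b" for b
  proof -
    have "cov_deriv G (\<lambda>y c. cotetrad e y 1 c) x a b - cov_deriv G (\<lambda>y c. cotetrad e y 0 c) x a b
        = cov_deriv G (\<lambda>y c. cotetrad e y 1 c - cotetrad e y 0 c) x a b"
      by (rule cov_deriv_diff[symmetric]) (rule differentiable_cotetrad[OF x])+
    also have "\<dots> = cov_deriv G (\<lambda>y c. 2 * null_covector y c) x a b"
      by (rule cov_deriv_cong_open[OF open_U x]) (rule cotetrad_difference)
    also have "\<dots> = 2 * cov_deriv G null_covector x a b"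
      by (rule cov_deriv_cmult) (rule differentiable_null_covector[OF x])
    finally show ?thesis .
  qed
  then show ?thesis
    by (simp add: conn_form_def sum_eta_mult sum_distrib_left right_diff_distrib[symmetric]
        sum_subtractf[symmetric] mult_ac)
qed

lemma pullback_conn_form_eq:
  assumes x: "x \<in> U" "\<Omega> x = 0" and "expansion G e \<Omega> x = 0" "shear G e \<Omega> x = 0"
    and I: "I \<in> {2, 3}"
  shows "pullback_eq \<Omega> x (\<lambda>a. conn_form G e x a I 1) (\<lambda>a. conn_form G e x a I 0)"
  unfolding pullback_eq_def
proof (intro allI impI)
  fix X assume X: "tangent_scri \<Omega> x X"
  have "eta I I = 1" using I by auto
  then have "(\<Sum>a\<in>UNIV. X $ a * conn_form G e x a I 1) - (\<Sum>a\<in>UNIV. X $ a * conn_form G e x a I 0)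
      = 2 * (\<Sum>a\<in>UNIV. X $ a * (\<Sum>b\<in>UNIV. e I x $ b * cov_deriv G null_covector x a b))"
    by (simp add: sum_subtractf[symmetric] right_diff_distrib[symmetric]
        conn_form_difference[OF x(1)] sum_distrib_left mult_ac)
  also have "\<dots> = 2 * bilinear_form (hessian x) (\<lambda>a. X $ a) (\<lambda>b. e I x $ b)
      + 2 * (\<Sum>a\<in>UNIV. \<Sum>b\<in>UNIV. X $ a *
               (e I x $ b * pd a (\<lambda>y. null_defect y b) x))"
    by (simp add: bilinear_form_def cov_deriv_null_covector[OF x] sum_distrib_left algebra_simps
        sum.distrib)
  also have "(\<Sum>a\<in>UNIV. \<Sum>b\<in>UNIV. X $ a *
               (e I x $ b * pd a (\<lambda>y. null_defect y b) x))
      = (\<Sum>b\<in>UNIV. e I x $ b *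
               (\<Sum>a\<in>UNIV. X $ a * pd a (\<lambda>y. null_defect y b) x))"
    by (subst sum.swap) (simp add: sum_distrib_left mult_ac)
  also have "2 * bilinear_form (hessian x) (\<lambda>a. X $ a) (\<lambda>b. e I x $ b)
      + 2 * (\<Sum>b\<in>UNIV. e I x $ b *
               (\<Sum>a\<in>UNIV. X $ a * pd a (\<lambda>y. null_defect y b) x)) = 0"
    using hessian_tangent_screen_zero[OF x X assms(3,4) I] null_defect_tangent[OF x X] by simp
  finally show "(\<Sum>a\<in>UNIV. X $ a * conn_form G e x a I 1) = (\<Sum>a\<in>UNIV. X $ a * conn_form G e x a I 0)"
    by simp
qed

end

theorem theorem1:
  fixes U :: "(real^4) set"
    and G :: "real^4 \<Rightarrow> real^4^4"
    and \<Omega> u :: "real^4 \<Rightarrow> real"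
    and e :: "4 \<Rightarrow> real^4 \<Rightarrow> real^4"
  defines "scri \<equiv> {x \<in> U. \<Omega> x = 0}"
  assumes U_open: "open U"
    and G_smooth: "\<forall>a b. smooth_on U (\<lambda>y. G y $ a $ b)"
    and G_sym: "\<forall>x\<in>U. \<forall>a b. G x $ a $ b = G x $ b $ a"
    and \<Omega>_smooth: "smooth_on U \<Omega>"
    and grad_nonzero: "\<forall>x\<in>scri. \<exists>a. pd a \<Omega> x \<noteq> 0"
    and scri_null: "\<forall>x\<in>scri. (\<Sum>a\<in>UNIV. \<Sum>b\<in>UNIV. ginv G x a b * pd a \<Omega> x * pd b \<Omega> x) = 0"
    and e_smooth: "\<forall>I a. smooth_on U (\<lambda>y. e I y $ a)"
    and e_orthonormal: "\<forall>x\<in>U. orthonormal_tetrad G e x"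
    and n_frame: "\<forall>x\<in>scri. \<forall>a. (e 0 x $ a + e 1 x $ a) / 2 = nvec G \<Omega> x a"
    and u_smooth: "smooth_on U u"
    and cuts_transverse: "\<forall>x\<in>scri. (\<Sum>a\<in>UNIV. nvec G \<Omega> x a * pd a u x) \<noteq> 0"
    and e2_tangent_cuts: "\<forall>x\<in>scri. (\<Sum>a\<in>UNIV. e 2 x $ a * pd a u x) = 0"
    and e3_tangent_cuts: "\<forall>x\<in>scri. (\<Sum>a\<in>UNIV. e 3 x $ a * pd a u x) = 0"
    and expansion_zero: "\<forall>x\<in>scri. expansion G e \<Omega> x = 0"
    and shear_zero: "\<forall>x\<in>scri. shear G e \<Omega> x = 0"
  shows "\<forall>x\<in>scri.
           pullback_eq \<Omega> x (\<lambda>a. conn_form G e x a 2 1) (\<lambda>a. conn_form G e x a 2 0)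
         \<and> pullback_eq \<Omega> x (\<lambda>a. conn_form G e x a 3 1) (\<lambda>a. conn_form G e x a 3 0)"
proof -
  \<comment> \<open>scri_null follows from n_frame and orthonormality.\<close>
  have "scri_tetrad U G \<Omega> e"
    using U_open G_sym grad_nonzero e_orthonormal n_frame
      smooth_on_imp_differentiable[OF G_smooth[rule_format]]
      smooth_on_imp_differentiable[OF e_smooth[rule_format]]
      smooth_on_imp_differentiable[OF \<Omega>_smooth] smooth_on_imp_differentiable_pd[OF \<Omega>_smooth]
    by unfold_locales (auto simp: scri_def)
  then show ?thesis
    using scri_tetrad.pullback_conn_form_eq expansion_zero shear_zero by (auto simp: scri_def)
qed

end
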